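(* Let $p_0,p_1,\dots,p_{n-1}$ ($n\ge 3$) be distinct points in $\mathbb{R}^2$, indices taken modulo $n$ (so $p_n=p_0$), such that $P=\bigcup_{i=1}^n I_i$, $I_i=[p_{i-1},p_i]$, is a simple closed $n$-gon. For $1\le i\le n$ let $u_i$ be the unit vector perpendicular to the line $\mathrm{aff}\, I_i$ oriented so that for every $b\in\mathrm{relint}\, I_i$ and all sufficiently small $\varepsilon>0$ one has $b+\varepsilon u_i\in\mathrm{ext}P$ and $b-\varepsilon u_i\in\mathrm{int}P$, and put $u_{i,i+1}=u_i+u_{i+1}$ (with $u_{n+1}=u_1$). Then for every sufficiently small $\varepsilon>0$ we have $p_i+\varepsilon u_{i,i+1}\in\mathrm{ext}P$ and $p_i-\varepsilon u_{i,i+1}\in\mathrm{int}P$ for all $1\le i\le n$.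
   Context: A simple closed $n$-gon is a polygon $P=\bigcup_{i=1}^n[p_{i-1},p_i]$ with $n$ distinct vertices $p_0,\dots,p_{n-1}$, $p_n=p_0$, whose edges intersect only in the common endpoints of consecutive edges ($[p_{i-1},p_i]\cap[p_i,p_{i+1}]=\{p_i\}$, $[p_0,p_1]\cap[p_{n-1},p_0]=\{p_0\}$, and non-consecutive edges are disjoint). $\mathbb{R}^2\setminus P$ has exactly two connected components; the bounded one is $\mathrm{int}P$ (interior), the unbounded one is $\mathrm{ext}P$ (exterior), and $P$ is the boundary of each. $\mathrm{relint}$ denotes relative interior, $\mathrm{aff}$ affine hull. *)

theory Defs
  imports "HOL-Analysis.Analysis"
begin

definition poly_edge :: "nat \<Rightarrow> (nat \<Rightarrow> real^2) \<Rightarrow> nat \<Rightarrow> (real^2) set" where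
  "poly_edge n p i = closed_segment (p ((i + n - 1) mod n)) (p (i mod n))"

definition polygon_set :: "nat \<Rightarrow> (nat \<Rightarrow> real^2) \<Rightarrow> (real^2) set" where
  "polygon_set n p = (\<Union>i\<in>{1..n}. poly_edge n p i)"

definition simple_polygon :: "nat \<Rightarrow> (nat \<Rightarrow> real^2) \<Rightarrow> bool" where
  "simple_polygon n p \<longleftrightarrow>
     3 \<le> n \<and> inj_on p {..<n} \<and>
     (\<forall>i\<in>{1..n}. poly_edge n p i \<inter> poly_edge n p (i mod n + 1) = {p (i mod n)}) \<and>
     (\<forall>i\<in>{1..n}. \<forall>j\<in>{1..n}. i \<noteq> j \<and> j \<noteq> i mod n + 1 \<and> i \<noteq> j mod n + 1 \<longrightarrow>
          poly_edge n p i \<inter> poly_edge n p j = {})"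

end

theory Submission imports Defs begin

text \<open>Near a vertex \<open>v\<close> the polygon consists of the two edges \<open>[w, v]\<close> and \<open>[v, z]\<close>, with outer unit
  normals \<open>u\<^sub>1\<close>, \<open>u\<^sub>2\<close>. A convex set missing \<open>P\<close> lies in one component of the complement, so
  \<open>v + \<epsilon>(u\<^sub>1 + u\<^sub>2)\<close> is outside as soon as it shares such a set with a point \<open>b + \<epsilon> u\<^sub>k\<close> just outside an
  edge. Which set works depends on the turn at \<open>v\<close>: if \<open>z\<close> lies weakly behind the line of the first
  edge, the small open half-ball in front of that line misses \<open>P\<close>; otherwise the quadrant in front
  of both edge lines does. In both cases the test point lies in the region because \<open>u\<^sub>1 + u\<^sub>2\<close> has
  positive inner product with both normals; this needs \<open>u\<^sub>1 + u\<^sub>2 \<noteq> 0\<close>, which holds since otherwise the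
  edges are collinear and one half-ball would contain points both outside and inside. Reversing the
  normals gives the inside claim, and finitely many vertices allow a common \<open>\<epsilon>\<close>.\<close>

lemma connected_component_subset_inside:
  assumes "x \<in> inside P"
  shows "connected_component_set (- P) x \<subseteq> inside P"
proof
  fix y assume y: "y \<in> connected_component_set (- P) x"
  hence "connected_component_set (- P) y = connected_component_set (- P) x"
    by (rule connected_component_eq)
  moreover have "y \<notin> P" using y connected_component_subset by blast
  ultimately show "y \<in> inside P" using assms unfolding inside_def by simp
qed

lemma connected_component_subset_outside:
  assumes "x \<in> outside P"
  shows "connected_component_set (- P) x \<subseteq> outside P"
proof
  fix y assume y: "y \<in> connected_component_set (- P) x"
  hence "connected_component_set (- P) y = connected_component_set (- P) x"
    by (rule connected_component_eq)
  moreover have "y \<notin> P" using y connected_component_subset by blast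
  ultimately show "y \<in> outside P" using assms unfolding outside_def by simp
qed

lemma convex_mem_component_union:
  fixes S P :: "'a::real_normed_vector set"
  assumes X: "\<And>x. x \<in> X \<Longrightarrow> connected_component_set (- P) x \<subseteq> X"
    and "convex S" "S \<inter> P = {}" "x \<in> S" "y \<in> S" "x \<in> X"
  shows "y \<in> X"
proof -
  have "S \<subseteq> connected_component_set (- P) x"
    using assms by (intro connected_component_maximal convex_connected) auto
  thus ?thesis using X assms(5,6) by blast
qed

lemma open_segment_Int_ball_nonempty:
  fixes a b :: "'a::euclidean_space"
  assumes "a \<noteq> b" "0 < r"
  shows "open_segment a b \<inter> ball b r \<noteq> {}"
proof -
  have "b \<in> ball b r \<inter> closure (open_segment a b)" using assms by simp
  hence "ball b r \<inter> closure (open_segment a b) \<noteq> {}" by blast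
  thus ?thesis using open_Int_closure_eq_empty[of "ball b r" "open_segment a b"] by (auto simp: Int_commute)
qed

lemma closed_segment_ray:
  "x \<in> closed_segment a b \<Longrightarrow> \<exists>t\<ge>0. x = a + t *\<^sub>R (b - a)"
  unfolding in_segment by (auto simp: algebra_simps)

lemma open_segment_ray:
  "x \<in> open_segment a b \<Longrightarrow> \<exists>t>0. x = a + t *\<^sub>R (b - a)"
  unfolding in_segment by (force simp: algebra_simps)

lemma eventually_at_right_along_open:
  fixes d :: "'a::real_normed_vector"
  assumes "open S" "q \<in> S"
  shows "\<forall>\<^sub>F \<epsilon> in at_right 0. q + \<epsilon> *\<^sub>R d \<in> S"
proof -
  have "((\<lambda>\<epsilon>::real. q + \<epsilon> *\<^sub>R d) \<longlongrightarrow> q) (at_right 0)"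
    by (auto intro!: tendsto_eq_intros)
  thus ?thesis using assms by (rule topological_tendstoD)
qed

lemma eventually_at_right_inner_gt:
  fixes u d q :: "'a::real_inner"
  assumes "0 < u \<bullet> d" "c \<le> u \<bullet> q"
  shows "\<forall>\<^sub>F \<epsilon> in at_right 0. c < u \<bullet> (q + \<epsilon> *\<^sub>R d)"
  using eventually_at_right_less[of 0]
  by eventually_elim (use assms in \<open>simp add: inner_add_right, smt (verit) mult_pos_pos\<close>)

lemma eventually_at_right_zero_iff:
  "(\<forall>\<^sub>F \<epsilon> in at_right (0::real). Q \<epsilon>) \<longleftrightarrow> (\<exists>\<delta>>0. \<forall>\<epsilon>. 0 < \<epsilon> \<and> \<epsilon> < \<delta> \<longrightarrow> Q \<epsilon>)"
  unfolding eventually_at_right_field by blast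

lemma inner_unit_sum_pos:
  fixes u1 u2 :: "'a::real_inner"
  assumes "norm u1 = 1" "norm u2 = 1" "u1 + u2 \<noteq> 0"
  shows "0 < u1 \<bullet> (u1 + u2)"
proof -
  have "(u1 + u2) \<bullet> (u1 + u2) = 2 * (u1 \<bullet> (u1 + u2))"
    using assms(1,2) by (simp add: algebra_simps inner_commute norm_eq_1)
  thus ?thesis using assms(3) by (smt (verit) inner_gt_zero_iff)
qed

locale polygon_corner =
  fixes P :: "'a::euclidean_space set" and r :: real and w v z u1 u2 :: 'a
  assumes r_pos: "0 < r"
    and P_near_v: "P \<inter> ball v r \<subseteq> closed_segment w v \<union> closed_segment v z"
    and w_ne_v: "w \<noteq> v" and z_ne_v: "z \<noteq> v"
    and norm_u1: "norm u1 = 1" and norm_u2: "norm u2 = 1"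
    and u1_orth: "u1 \<bullet> (v - w) = 0" and u2_orth: "u2 \<bullet> (z - v) = 0"
begin

abbreviation half_ball :: "'a set" where
  "half_ball \<equiv> ball v r \<inter> {y. u1 \<bullet> v < u1 \<bullet> y}"

lemma convex_half_ball: "convex half_ball"
  by (intro convex_Int convex_ball convex_halfspace_gt)

lemma open_half_ball: "open half_ball"
  by (intro open_Int open_ball open_halfspace_gt)

lemma polygon_corner_uminus: "polygon_corner P r w v z (- u1) (- u2)"
  using r_pos P_near_v w_ne_v z_ne_v norm_u1 norm_u2 u1_orth u2_orth
  by unfold_locales auto

lemma inner_u1_first_edge:
  assumes "y \<in> closed_segment w v"
  shows "u1 \<bullet> y = u1 \<bullet> v"
proof -
  obtain t where "y = v + t *\<^sub>R (w - v)"
    using closed_segment_ray[of y v w] assms by (auto simp: closed_segment_commute)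
  moreover have "u1 \<bullet> (w - v) = 0" using u1_orth by (simp add: inner_diff_right)
  ultimately show ?thesis by (simp add: inner_add_right)
qed

lemma inner_second_edge:
  assumes "y = v + t *\<^sub>R (z - v)"
  shows "u2 \<bullet> y = u2 \<bullet> v" "u1 \<bullet> y = u1 \<bullet> v + t * (u1 \<bullet> (z - v))"
  using assms u2_orth by (simp_all add: inner_add_right)

lemma inner_second_edge_le:
  assumes "u1 \<bullet> (z - v) \<le> 0" "y \<in> closed_segment v z"
  shows "u1 \<bullet> y \<le> u1 \<bullet> v"
proof -
  obtain t where "t \<ge> 0" "y = v + t *\<^sub>R (z - v)" using closed_segment_ray[OF assms(2)] by blast
  thus ?thesis using inner_second_edge(2)[of y t] assms(1) by (simp add: mult_nonneg_nonpos)
qed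

lemma quadrant_Int_P: "(half_ball \<inter> {y. u2 \<bullet> v < u2 \<bullet> y}) \<inter> P = {}"
proof (rule equals0I)
  fix y assume y: "y \<in> (half_ball \<inter> {y. u2 \<bullet> v < u2 \<bullet> y}) \<inter> P"
  hence "y \<in> closed_segment w v \<union> closed_segment v z" using P_near_v by blast
  thus False
  proof
    assume "y \<in> closed_segment w v"
    thus False using y inner_u1_first_edge[of y] by simp
  next
    assume "y \<in> closed_segment v z"
    then obtain t where "y = v + t *\<^sub>R (z - v)" using closed_segment_ray by blast
    thus False using y inner_second_edge(1)[of y t] by simp
  qed
qed

lemma half_ball_Int_P:
  assumes "u1 \<bullet> (z - v) \<le> 0"
  shows "half_ball \<inter> P = {}"
proof (rule equals0I)
  fix y assume y: "y \<in> half_ball \<inter> P"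
  hence "y \<in> closed_segment w v \<union> closed_segment v z" using P_near_v by blast
  thus False using y inner_u1_first_edge[of y] inner_second_edge_le[OF assms, of y] by auto
qed

lemma eventually_in_half_ball:
  assumes "b \<in> ball v r" "u1 \<bullet> v \<le> u1 \<bullet> b" "0 < u1 \<bullet> d"
  shows "\<forall>\<^sub>F \<epsilon> in at_right 0. b + \<epsilon> *\<^sub>R d \<in> half_ball"
  using eventually_at_right_along_open[OF open_ball assms(1)] eventually_at_right_inner_gt[OF assms(3,2)]
  by eventually_elim simp

lemma exists_first_edge_point: obtains b where "b \<in> open_segment w v" "b \<in> ball v r"
  using open_segment_Int_ball_nonempty[OF w_ne_v r_pos] by blast

lemma exists_second_edge_point:
  obtains b t where "b \<in> open_segment v z" "b \<in> ball v r" "0 < t" "b = v + t *\<^sub>R (z - v)"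
  using open_segment_Int_ball_nonempty[OF z_ne_v r_pos] open_segment_ray
  by (metis disjoint_iff open_segment_commute)

lemma eventually_corner_in_component_union:
  assumes X: "\<And>x. x \<in> X \<Longrightarrow> connected_component_set (- P) x \<subseteq> X"
    and sum_ne: "u1 + u2 \<noteq> 0"
    and X1: "\<forall>b\<in>open_segment w v. \<forall>\<^sub>F \<epsilon> in at_right 0. b + \<epsilon> *\<^sub>R u1 \<in> X"
    and X2: "\<forall>b\<in>open_segment v z. \<forall>\<^sub>F \<epsilon> in at_right 0. b + \<epsilon> *\<^sub>R u2 \<in> X"
  shows "\<forall>\<^sub>F \<epsilon> in at_right 0. v + \<epsilon> *\<^sub>R (u1 + u2) \<in> X"
proof -
  have uu1: "0 < u1 \<bullet> u1" and uu2: "0 < u2 \<bullet> u2" using norm_u1 norm_u2 by (simp_all add: norm_eq_1)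
  have pos1: "0 < u1 \<bullet> (u1 + u2)" using inner_unit_sum_pos norm_u1 norm_u2 sum_ne .
  have pos2: "0 < u2 \<bullet> (u1 + u2)"
    using inner_unit_sum_pos[OF norm_u2 norm_u1] sum_ne by (simp add: add.commute)
  have corner_half_ball: "\<forall>\<^sub>F \<epsilon> in at_right 0. v + \<epsilon> *\<^sub>R (u1 + u2) \<in> half_ball"
    using eventually_in_half_ball[OF _ _ pos1] r_pos by simp
  show ?thesis
  proof (cases "u1 \<bullet> (z - v) \<le> 0")
    case True
    obtain b where b: "b \<in> open_segment w v" "b \<in> ball v r" by (rule exists_first_edge_point)
    have "u1 \<bullet> b = u1 \<bullet> v" using b(1) inner_u1_first_edge open_closed_segment by blast
    hence "\<forall>\<^sub>F \<epsilon> in at_right 0. b + \<epsilon> *\<^sub>R u1 \<in> half_ball"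
      using eventually_in_half_ball[OF b(2) _ uu1] by simp
    with corner_half_ball bspec[OF X1 b(1)] show ?thesis
      by eventually_elim (use convex_mem_component_union[OF X convex_half_ball half_ball_Int_P[OF True]] in blast)
  next
    case False
    define Q where "Q = half_ball \<inter> {y. u2 \<bullet> v < u2 \<bullet> y}"
    have convex_Q: "convex Q" unfolding Q_def by (intro convex_Int convex_half_ball convex_halfspace_gt)
    have Q_Int_P: "Q \<inter> P = {}" unfolding Q_def by (rule quadrant_Int_P)
    obtain b t where b: "b \<in> open_segment v z" "b \<in> ball v r" "0 < t" "b = v + t *\<^sub>R (z - v)"
      by (rule exists_second_edge_point)
    have "b \<in> half_ball" using b False inner_second_edge(2)[OF b(4)] by auto
    hence "\<forall>\<^sub>F \<epsilon> in at_right 0. b + \<epsilon> *\<^sub>R u2 \<in> half_ball"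
      by (rule eventually_at_right_along_open[OF open_half_ball])
    moreover have "\<forall>\<^sub>F \<epsilon> in at_right 0. u2 \<bullet> v < u2 \<bullet> (b + \<epsilon> *\<^sub>R u2)"
      using eventually_at_right_inner_gt[OF uu2] inner_second_edge(1)[OF b(4)] by simp
    moreover have "\<forall>\<^sub>F \<epsilon> in at_right 0. u2 \<bullet> v < u2 \<bullet> (v + \<epsilon> *\<^sub>R (u1 + u2))"
      using eventually_at_right_inner_gt[OF pos2] by simp
    ultimately have "\<forall>\<^sub>F \<epsilon> in at_right 0. b + \<epsilon> *\<^sub>R u2 \<in> Q \<and> v + \<epsilon> *\<^sub>R (u1 + u2) \<in> Q"
      using corner_half_ball unfolding Q_def by eventually_elim blast
    with bspec[OF X2 b(1)] show ?thesis
      by eventually_elim (use convex_mem_component_union[OF X convex_Q Q_Int_P] in blast)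
  qed
qed

lemma normal_sum_nonzero:
  assumes out1: "\<forall>b\<in>open_segment w v. \<forall>\<^sub>F \<epsilon> in at_right 0. b + \<epsilon> *\<^sub>R u1 \<in> outside P"
    and in2: "\<forall>b\<in>open_segment v z. \<forall>\<^sub>F \<epsilon> in at_right 0. b - \<epsilon> *\<^sub>R u2 \<in> inside P"
  shows "u1 + u2 \<noteq> 0"
proof
  assume "u1 + u2 = 0"
  hence u2: "u2 = - u1" by (simp add: add.commute eq_neg_iff_add_eq_0)
  have uu1: "0 < u1 \<bullet> u1" using norm_u1 by (simp add: norm_eq_1)
  have disjoint: "half_ball \<inter> P = {}" using half_ball_Int_P u2_orth u2 by simp
  obtain b1 where b1: "b1 \<in> open_segment w v" "b1 \<in> ball v r" by (rule exists_first_edge_point)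
  obtain b2 t where b2: "b2 \<in> open_segment v z" "b2 \<in> ball v r" "b2 = v + t *\<^sub>R (z - v)"
    by (rule exists_second_edge_point)
  have b1_on_line: "u1 \<bullet> b1 = u1 \<bullet> v" using b1(1) inner_u1_first_edge open_closed_segment by blast
  have b2_on_line: "u1 \<bullet> b2 = u1 \<bullet> v" using inner_second_edge(1)[OF b2(3)] u2 by simp
  have "\<forall>\<^sub>F \<epsilon> in at_right 0. b1 + \<epsilon> *\<^sub>R u1 \<in> half_ball"
    using eventually_in_half_ball[OF b1(2) _ uu1] b1_on_line by simp
  moreover have "\<forall>\<^sub>F \<epsilon> in at_right 0. b2 + \<epsilon> *\<^sub>R u1 \<in> half_ball"
    using eventually_in_half_ball[OF b2(2) _ uu1] b2_on_line by simp
  moreover have "\<forall>\<^sub>F \<epsilon> in at_right 0. b1 + \<epsilon> *\<^sub>R u1 \<in> outside P" using out1 b1(1) by blast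
  moreover have "\<forall>\<^sub>F \<epsilon> in at_right 0. b2 + \<epsilon> *\<^sub>R u1 \<in> inside P" using in2 b2(1) u2 by simp
  ultimately have "\<forall>\<^sub>F \<epsilon> in at_right 0. b1 + \<epsilon> *\<^sub>R u1 \<in> half_ball \<and> b2 + \<epsilon> *\<^sub>R u1 \<in> half_ball \<and>
                     b1 + \<epsilon> *\<^sub>R u1 \<in> outside P \<and> b2 + \<epsilon> *\<^sub>R u1 \<in> inside P"
    by (intro eventually_conj)
  then obtain \<epsilon> where \<epsilon>: "b1 + \<epsilon> *\<^sub>R u1 \<in> half_ball" "b2 + \<epsilon> *\<^sub>R u1 \<in> half_ball"
      "b1 + \<epsilon> *\<^sub>R u1 \<in> outside P" "b2 + \<epsilon> *\<^sub>R u1 \<in> inside P"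
    using eventually_happens'[OF trivial_limit_at_right_real] by blast
  have "b2 + \<epsilon> *\<^sub>R u1 \<in> outside P"
    using convex_mem_component_union[OF connected_component_subset_outside convex_half_ball disjoint]
      \<epsilon>(1-3) by blast
  thus False using \<epsilon>(4) inside_Int_outside by blast
qed

lemma eventually_corner_outside_inside:
  assumes h1: "\<forall>b\<in>open_segment w v. \<forall>\<^sub>F \<epsilon> in at_right 0.
                 b + \<epsilon> *\<^sub>R u1 \<in> outside P \<and> b - \<epsilon> *\<^sub>R u1 \<in> inside P"
    and h2: "\<forall>b\<in>open_segment v z. \<forall>\<^sub>F \<epsilon> in at_right 0.
                 b + \<epsilon> *\<^sub>R u2 \<in> outside P \<and> b - \<epsilon> *\<^sub>R u2 \<in> inside P"
  shows "\<forall>\<^sub>F \<epsilon> in at_right 0.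
           v + \<epsilon> *\<^sub>R (u1 + u2) \<in> outside P \<and> v - \<epsilon> *\<^sub>R (u1 + u2) \<in> inside P"
proof -
  have out1: "\<forall>b\<in>open_segment w v. \<forall>\<^sub>F \<epsilon> in at_right 0. b + \<epsilon> *\<^sub>R u1 \<in> outside P"
    and in1: "\<forall>b\<in>open_segment w v. \<forall>\<^sub>F \<epsilon> in at_right 0. b + \<epsilon> *\<^sub>R (- u1) \<in> inside P"
    using h1 by (simp_all add: eventually_conj_iff ball_conj_distrib)
  have out2: "\<forall>b\<in>open_segment v z. \<forall>\<^sub>F \<epsilon> in at_right 0. b + \<epsilon> *\<^sub>R u2 \<in> outside P"
    and in2: "\<forall>b\<in>open_segment v z. \<forall>\<^sub>F \<epsilon> in at_right 0. b + \<epsilon> *\<^sub>R (- u2) \<in> inside P"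
    using h2 by (simp_all add: eventually_conj_iff ball_conj_distrib)
  have sum_ne: "u1 + u2 \<noteq> 0" using normal_sum_nonzero out1 in2 by simp
  hence "- u1 + - u2 \<noteq> 0" by (simp add: neg_eq_iff_add_eq_0 add.commute)
  \<comment> \<open>the inside claim is the outside argument for the reversed normals\<close>
  hence "\<forall>\<^sub>F \<epsilon> in at_right 0. v + \<epsilon> *\<^sub>R (- u1 + - u2) \<in> inside P"
    using polygon_corner.eventually_corner_in_component_union[OF polygon_corner_uminus, of "inside P"]
      connected_component_subset_inside in1 in2 by blast
  moreover have "\<forall>\<^sub>F \<epsilon> in at_right 0. v + \<epsilon> *\<^sub>R (u1 + u2) \<in> outside P"
    using eventually_corner_in_component_union[of "outside P"]
      connected_component_subset_outside sum_ne out1 out2 by blast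
  ultimately show ?thesis by eventually_elim (simp add: algebra_simps)
qed

end

lemma mod_pred_ne:
  fixes i n :: nat
  assumes "1 \<le> i" "2 \<le> n"
  shows "(i + n - 1) mod n \<noteq> i mod n"
proof -
  obtain j where "i = Suc j" using assms by (cases i) auto
  thus ?thesis using assms by (auto simp: mod_Suc)
qed

lemma simple_polygon_edge_ends_distinct:
  assumes "simple_polygon n p" "i \<in> {1..n}"
  shows "p ((i + n - 1) mod n) \<noteq> p (i mod n)"
proof
  assume "p ((i + n - 1) mod n) = p (i mod n)"
  moreover have "inj_on p {..<n}" "3 \<le> n" using assms(1) unfolding simple_polygon_def by auto
  ultimately have "(i + n - 1) mod n = i mod n" by (auto dest: inj_onD)
  thus False using mod_pred_ne[of i n] assms(2) \<open>3 \<le> n\<close> by simp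
qed

lemma simple_polygon_vertex_notin_other_edge:
  assumes "simple_polygon n p" "i \<in> {1..n}" "j \<in> {1..n}" "j \<noteq> i" "j \<noteq> i mod n + 1"
  shows "p (i mod n) \<notin> poly_edge n p j"
proof
  assume vj: "p (i mod n) \<in> poly_edge n p j"
  have vi: "p (i mod n) \<in> poly_edge n p i" unfolding poly_edge_def by simp
  have n: "3 \<le> n" and inj: "inj_on p {..<n}"
    and adjacent: "\<forall>i\<in>{1..n}. poly_edge n p i \<inter> poly_edge n p (i mod n + 1) = {p (i mod n)}"
    and nonadjacent: "\<forall>i\<in>{1..n}. \<forall>j\<in>{1..n}. i \<noteq> j \<and> j \<noteq> i mod n + 1 \<and> i \<noteq> j mod n + 1 \<longrightarrow>
                        poly_edge n p i \<inter> poly_edge n p j = {}"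
    using assms(1) unfolding simple_polygon_def by blast+
  show False
  proof (cases "i = j mod n + 1")
    case True
    hence "p (i mod n) = p (j mod n)" using bspec[OF adjacent assms(3)] vi vj by blast
    hence "i mod n = j mod n" using inj n by (auto dest: inj_onD)
    thus False using True n by (cases "j mod n + 1 = n") (auto simp: mod_Suc)
  next
    case False
    thus False using nonadjacent assms(2-5) vi vj by blast
  qed
qed

lemma simple_polygon_near_vertex:
  assumes "simple_polygon n p" "i \<in> {1..n}"
  obtains r where "0 < r"
    "polygon_set n p \<inter> ball (p (i mod n)) r \<subseteq> poly_edge n p i \<union> poly_edge n p (i mod n + 1)"
proof -
  define K where "K = (\<Union>j\<in>{1..n} - {i, i mod n + 1}. poly_edge n p j)"
  have "closed K" unfolding K_def poly_edge_def by (intro closed_UN) auto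
  moreover have "p (i mod n) \<notin> K"
    unfolding K_def using simple_polygon_vertex_notin_other_edge[OF assms] by blast
  ultimately obtain r where "0 < r" "ball (p (i mod n)) r \<subseteq> - K"
    using open_contains_ball[of "- K"] by (auto simp: open_Compl)
  moreover have "polygon_set n p \<subseteq> poly_edge n p i \<union> poly_edge n p (i mod n + 1) \<union> K"
    unfolding polygon_set_def K_def by blast
  ultimately show ?thesis using that by blast
qed

lemma simple_polygon_vertex_eventually:
  fixes p u :: "nat \<Rightarrow> real^2"
  assumes simple: "simple_polygon n p" and i: "i \<in> {1..n}"
    and normals: "\<forall>i\<in>{1..n}. norm (u i) = 1 \<and> u i \<bullet> (p (i mod n) - p ((i + n - 1) mod n)) = 0"
    and sides: "\<forall>i\<in>{1..n}. \<forall>b\<in>open_segment (p ((i + n - 1) mod n)) (p (i mod n)).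
                  \<forall>\<^sub>F \<epsilon> in at_right 0. b + \<epsilon> *\<^sub>R u i \<in> outside (polygon_set n p) \<and>
                                          b - \<epsilon> *\<^sub>R u i \<in> inside (polygon_set n p)"
  shows "\<forall>\<^sub>F \<epsilon> in at_right 0.
           p (i mod n) + \<epsilon> *\<^sub>R (u i + u (i mod n + 1)) \<in> outside (polygon_set n p) \<and>
           p (i mod n) - \<epsilon> *\<^sub>R (u i + u (i mod n + 1)) \<in> inside (polygon_set n p)"
proof -
  define j where "j = i mod n + 1"
  define w v z where "w = p ((i + n - 1) mod n)" and "v = p (i mod n)" and "z = p (j mod n)"
  have n: "0 < n" using simple unfolding simple_polygon_def by simp
  have j: "j \<in> {1..n}" and pred_j: "(j + n - 1) mod n = i mod n"
    using n unfolding j_def by (auto simp: Suc_leI)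
  obtain r where r: "0 < r" "polygon_set n p \<inter> ball v r \<subseteq> poly_edge n p i \<union> poly_edge n p j"
    using simple_polygon_near_vertex[OF simple i] unfolding j_def v_def by blast
  have "w \<noteq> v" using simple_polygon_edge_ends_distinct[OF simple i] unfolding w_def v_def .
  moreover have "z \<noteq> v"
    using simple_polygon_edge_ends_distinct[OF simple j] unfolding z_def v_def pred_j by simp
  moreover have "norm (u i) = 1" "u i \<bullet> (v - w) = 0"
    using bspec[OF normals i] unfolding v_def w_def by simp_all
  moreover have "norm (u j) = 1" "u j \<bullet> (z - v) = 0"
    using bspec[OF normals j] unfolding pred_j z_def v_def by simp_all
  moreover have "polygon_set n p \<inter> ball v r \<subseteq> closed_segment w v \<union> closed_segment v z"
    using r(2) unfolding poly_edge_def pred_j w_def v_def z_def .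
  ultimately interpret polygon_corner "polygon_set n p" r w v z "u i" "u j"
    using r(1) by unfold_locales
  have "\<forall>b\<in>open_segment w v. \<forall>\<^sub>F \<epsilon> in at_right 0.
          b + \<epsilon> *\<^sub>R u i \<in> outside (polygon_set n p) \<and> b - \<epsilon> *\<^sub>R u i \<in> inside (polygon_set n p)"
    using bspec[OF sides i] unfolding w_def v_def .
  moreover have "\<forall>b\<in>open_segment v z. \<forall>\<^sub>F \<epsilon> in at_right 0.
          b + \<epsilon> *\<^sub>R u j \<in> outside (polygon_set n p) \<and> b - \<epsilon> *\<^sub>R u j \<in> inside (polygon_set n p)"
    using bspec[OF sides j] unfolding pred_j v_def z_def .
  ultimately show ?thesis
    using eventually_corner_outside_inside unfolding v_def j_def by blast
qed

theorem lemma3p1: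
  fixes n :: nat and p u :: "nat \<Rightarrow> real^2"
  assumes "3 \<le> n"
    and "simple_polygon n p"
    and "\<forall>i\<in>{1..n}. norm (u i) = 1 \<and> u i \<bullet> (p (i mod n) - p ((i + n - 1) mod n)) = 0"
    and "\<forall>i\<in>{1..n}. \<forall>b\<in>open_segment (p ((i + n - 1) mod n)) (p (i mod n)).
           \<exists>\<delta>>0. \<forall>\<epsilon>. 0 < \<epsilon> \<and> \<epsilon> < \<delta> \<longrightarrow>
             b + \<epsilon> *\<^sub>R u i \<in> outside (polygon_set n p) \<and>
             b - \<epsilon> *\<^sub>R u i \<in> inside (polygon_set n p)"
  shows "\<exists>\<delta>>0. \<forall>\<epsilon>. 0 < \<epsilon> \<and> \<epsilon> < \<delta> \<longrightarrow>
           (\<forall>i\<in>{1..n}.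
              p (i mod n) + \<epsilon> *\<^sub>R (u i + u (i mod n + 1)) \<in> outside (polygon_set n p) \<and>
              p (i mod n) - \<epsilon> *\<^sub>R (u i + u (i mod n + 1)) \<in> inside (polygon_set n p))"
proof -
  have sides: "\<forall>i\<in>{1..n}. \<forall>b\<in>open_segment (p ((i + n - 1) mod n)) (p (i mod n)).
                 \<forall>\<^sub>F \<epsilon> in at_right 0. b + \<epsilon> *\<^sub>R u i \<in> outside (polygon_set n p) \<and>
                                         b - \<epsilon> *\<^sub>R u i \<in> inside (polygon_set n p)"
    using assms(4) by (simp only: eventually_at_right_zero_iff)
  have "\<forall>i\<in>{1..n}. \<forall>\<^sub>F \<epsilon> in at_right 0.
          p (i mod n) + \<epsilon> *\<^sub>R (u i + u (i mod n + 1)) \<in> outside (polygon_set n p) \<and>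
          p (i mod n) - \<epsilon> *\<^sub>R (u i + u (i mod n + 1)) \<in> inside (polygon_set n p)"
    using simple_polygon_vertex_eventually[OF assms(2) _ assms(3) sides] by blast
  hence "\<forall>\<^sub>F \<epsilon> in at_right 0. \<forall>i\<in>{1..n}.
          p (i mod n) + \<epsilon> *\<^sub>R (u i + u (i mod n + 1)) \<in> outside (polygon_set n p) \<and>
          p (i mod n) - \<epsilon> *\<^sub>R (u i + u (i mod n + 1)) \<in> inside (polygon_set n p)"
    by (rule eventually_ball_finite[rotated]) simp
  thus ?thesis unfolding eventually_at_right_zero_iff .
qed

end
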